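(* Let $\Omega$ be a convex domain in $\mathbb{R}^n$, let $\tau$ be a smooth symmetric $(0,2)$-tensor field on $\Omega$, and let $x_0\neq y_0$ be points of $\Omega$. Let $e_1,\dots,e_n$ be an orthonormal frame of $\mathbb{R}^n$ with $e_n=N(x_0,y_0)$, and let $\tilde E_n=(e_n,-e_n)\in\mathbb{R}^n\times\mathbb{R}^n$. Then $$\nabla_{\tilde E_n}\nabla_{\tilde E_n}E_{\tau}(x_0,y_0)=E_{\nabla_{e_n}\nabla_{e_n}\tau}(x_0,y_0).$$
   Context: For $x,y\in\mathbb{R}^n$ let $r(x,y)=\|x-y\|$, and for $x\neq y$ let $N(x,y)=\frac{y-x}{\|y-x\|}$ and $\theta(s,x,y)=x+sN(x,y)$. For a symmetric $(0,2)$-tensor field $\tau$ on $\Omega$, $E_\tau(x,y)=\int_0^{r(x,y)}\tau(\theta(s,x,y))(N(x,y),N(x,y))\,ds$, viewed as a function of $(x,y)\in\Omega\times\Omega$; $\nabla_{V}$ for $V\in\mathbb{R}^n\times\mathbb{R}^n$ denotes the directional derivative of a function of $(x,y)$ in direction $V$. $\nabla_{e_n}\nabla_{e_n}\tau$ is the second (Euclidean) covariant derivative of $\tau$ in direction $e_n$. *)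

theory Defs
  imports "HOL-Analysis.Analysis"
begin

fun Ck_on :: "nat \<Rightarrow> 'a::euclidean_space set \<Rightarrow> ('a \<Rightarrow> real) \<Rightarrow> bool" where
  "Ck_on 0 S f = continuous_on S f"
| "Ck_on (Suc k) S f = (f differentiable_on S \<and>
     (\<forall>i\<in>Basis. Ck_on k S (\<lambda>x. frechet_derivative f (at x) i)))"

definition smooth_on :: "'a::euclidean_space set \<Rightarrow> ('a \<Rightarrow> real) \<Rightarrow> bool" where
  "smooth_on S f = (\<forall>k. Ck_on k S f)"

definition smooth_sym_tensor_on ::
  "'a::euclidean_space set \<Rightarrow> ('a \<Rightarrow> 'a \<Rightarrow> 'a \<Rightarrow> real) \<Rightarrow> bool" where
  "smooth_sym_tensor_on S tau =
     ((\<forall>x\<in>S. bilinear (tau x) \<and> (\<forall>v w. tau x v w = tau x w v)) \<and>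
      (\<forall>v w. smooth_on S (\<lambda>x. tau x v w)))"

definition r :: "'a::euclidean_space \<Rightarrow> 'a \<Rightarrow> real" where
  "r x y = norm (x - y)"

definition N :: "'a::euclidean_space \<Rightarrow> 'a \<Rightarrow> 'a" where
  "N x y = (y - x) /\<^sub>R norm (y - x)"

definition \<theta> :: "real \<Rightarrow> 'a::euclidean_space \<Rightarrow> 'a \<Rightarrow> 'a" where
  "\<theta> s x y = x + s *\<^sub>R N x y"

definition E :: "('a::euclidean_space \<Rightarrow> 'a \<Rightarrow> 'a \<Rightarrow> real) \<Rightarrow> 'a \<times> 'a \<Rightarrow> real" where
  "E tau p = (case p of (x, y) \<Rightarrow>
      integral {0..r x y} (\<lambda>s. tau (\<theta> s x y) (N x y) (N x y)))"

definition dirderiv :: "('b::real_normed_vector \<Rightarrow> real) \<Rightarrow> 'b \<Rightarrow> 'b \<Rightarrow> real" where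
  "dirderiv F V p = deriv (\<lambda>t. F (p + t *\<^sub>R V)) 0"

text \<open>Euclidean covariant derivative of a (0,2)-tensor field in the constant direction e.\<close>
definition cov_deriv :: "'a::euclidean_space \<Rightarrow> ('a \<Rightarrow> 'a \<Rightarrow> 'a \<Rightarrow> real) \<Rightarrow> 'a \<Rightarrow> 'a \<Rightarrow> 'a \<Rightarrow> real" where
  "cov_deriv e tau p v w = deriv (\<lambda>t. tau (p + t *\<^sub>R e) v w) 0"

end

theory Submission
  imports Defs
begin

text \<open>Moving the endpoints towards each other along the line they span, as
  \<open>(x0 + a e, y0 - a e)\<close>, keeps the line fixed, so \<open>E\<^sub>\<tau>\<close> becomes
  \<open>\<integral>\<^sub>a\<^sup>L\<^sup>-\<^sup>a f\<close> with \<open>f u = \<tau>(x0 + u e)(e, e)\<close> and \<open>L = |y0 - x0|\<close>.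
  Differentiating twice in \<open>a\<close> at \<open>0\<close> gives \<open>f'(L) - f'(0)\<close>, which by the
  fundamental theorem of calculus is \<open>\<integral>\<^sub>0\<^sup>L f''\<close>, i.e. the right-hand side.\<close>

lemma dirderiv_along_line:
  "dirderiv F V (p + t *\<^sub>R V) = deriv (\<lambda>s. F (p + s *\<^sub>R V)) t"
proof -
  have "deriv (\<lambda>s. F (p + s *\<^sub>R V)) t = deriv (\<lambda>s. F (p + (s + t) *\<^sub>R V)) 0"
    unfolding deriv_def using DERIV_shift[of "\<lambda>s. F (p + s *\<^sub>R V)" _ 0 t] by simp
  then show ?thesis
    by (simp add: dirderiv_def algebra_simps)
qed

lemma dirderiv_dirderiv_eq_deriv_deriv:
  "dirderiv (dirderiv F V) V p = deriv (deriv (\<lambda>t. F (p + t *\<^sub>R V))) 0"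
  unfolding dirderiv_def[of "dirderiv F V"] dirderiv_along_line ..

lemma cov_deriv_eq_dirderiv:
  "cov_deriv e tau p v w = dirderiv (\<lambda>q. tau q v w) e p"
  by (simp add: cov_deriv_def dirderiv_def)

lemma has_real_derivative_along_line:
  fixes h :: "'a::real_normed_vector \<Rightarrow> real"
  assumes "h differentiable at (p + u *\<^sub>R e)"
  shows "((\<lambda>u. h (p + u *\<^sub>R e)) has_real_derivative dirderiv h e (p + u *\<^sub>R e)) (at u)"
proof -
  have "(\<lambda>u. p + u *\<^sub>R e) differentiable at u"
    by (auto intro!: derivative_intros)
  then have "(\<lambda>u. h (p + u *\<^sub>R e)) differentiable at u"
    using differentiable_chain_at[of "\<lambda>u. p + u *\<^sub>R e" u h] assms by (simp add: o_def)
  then show ?thesis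
    by (simp add: dirderiv_along_line DERIV_deriv_iff_real_differentiable)
qed

lemma dirderiv_eq_frechet_derivative:
  fixes h :: "'a::real_normed_vector \<Rightarrow> real"
  assumes "h differentiable at p"
  shows "dirderiv h e p = frechet_derivative h (at p) e"
proof -
  let ?D = "frechet_derivative h (at p)"
  have "((\<lambda>t. p + t *\<^sub>R e) has_derivative (\<lambda>t. t *\<^sub>R e)) (at 0)"
    by (auto intro!: derivative_eq_intros)
  moreover have "(h has_derivative ?D) (at (p + 0 *\<^sub>R e))"
    using assms frechet_derivative_works[of h "at p"] by simp
  ultimately have "((\<lambda>t. h (p + t *\<^sub>R e)) has_derivative (\<lambda>t. ?D (t *\<^sub>R e))) (at 0)"
    using has_derivative_compose by (fastforce simp: o_def)
  moreover have "(\<lambda>t. ?D (t *\<^sub>R e)) = (*) (?D e)"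
    using linear_frechet_derivative[OF assms] by (auto simp: linear_scale)
  ultimately have "((\<lambda>t. h (p + t *\<^sub>R e)) has_real_derivative ?D e) (at 0)"
    by (simp add: has_field_derivative_def)
  then show ?thesis
    unfolding dirderiv_def by (rule DERIV_imp_deriv)
qed

lemma differentiable_at_if_Ck_on:
  assumes "Ck_on k S h" "0 < k" "open S" "x \<in> S"
  shows "h differentiable at x"
  using assms by (cases k) (auto simp: differentiable_on_eq_differentiable_at)

lemma differentiable_dirderiv:
  fixes h :: "'a::euclidean_space \<Rightarrow> real"
  assumes "Ck_on 2 S h" "open S" "x \<in> S"
  shows "dirderiv h e differentiable at x"
proof -
  define D where "D y = (\<Sum>i\<in>Basis. (e \<bullet> i) * frechet_derivative h (at y) i)" for y
  have h: "h differentiable at y" if "y \<in> S" for y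
    using differentiable_at_if_Ck_on[OF assms(1) _ assms(2) that] by simp
  have "D differentiable at x"
    unfolding D_def using assms
    by (intro differentiable_sum differentiable_mult)
      (auto simp: numeral_2_eq_2 differentiable_on_eq_differentiable_at)
  moreover have "dirderiv h e y = D y" if "y \<in> S" for y
  proof -
    have "dirderiv h e y = frechet_derivative h (at y) (\<Sum>i\<in>Basis. (e \<bullet> i) *\<^sub>R i)"
      using dirderiv_eq_frechet_derivative[OF h[OF that]] by (simp add: euclidean_representation)
    also have "\<dots> = D y"
      using linear_frechet_derivative[OF h[OF that]] by (simp add: D_def linear_sum linear_scale)
    finally show ?thesis .
  qed
  moreover obtain d where "d > 0" "ball x d \<subseteq> S"
    using assms open_contains_ball by blast
  ultimately show ?thesis
    using differentiable_transform_within[of D x UNIV d "dirderiv h e"]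
    by (metis UNIV_I dist_commute mem_ball subsetD)
qed

lemma extended_segment_in_open_convex:
  fixes S :: "'a::real_normed_vector set"
  assumes "open S" "convex S" "x \<in> S" "x + L *\<^sub>R e \<in> S" "0 \<le> L"
  obtains \<delta> where "\<delta> > 0" "\<And>u. u \<in> {-\<delta>..L + \<delta>} \<Longrightarrow> x + u *\<^sub>R e \<in> S"
proof -
  define T where "T = (\<lambda>u. x + u *\<^sub>R e) -` S"
  have "open T"
    unfolding T_def using assms(1) by (intro open_vimage) (auto intro!: continuous_intros)
  moreover have "0 \<in> T" "L \<in> T"
    using assms by (auto simp: T_def)
  ultimately obtain \<epsilon>0 \<epsilon>L where "\<epsilon>0 > 0" "ball 0 \<epsilon>0 \<subseteq> T" "\<epsilon>L > 0" "ball L \<epsilon>L \<subseteq> T"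
    by (meson open_contains_ball)
  define \<delta> where "\<delta> = min \<epsilon>0 \<epsilon>L / 2"
  have "\<delta> > 0"
    using \<open>\<epsilon>0 > 0\<close> \<open>\<epsilon>L > 0\<close> by (simp add: \<delta>_def)
  have "-\<delta> \<in> ball 0 \<epsilon>0" "L + \<delta> \<in> ball L \<epsilon>L"
    using \<open>\<delta> > 0\<close> by (auto simp: \<delta>_def dist_real_def)
  then have "-\<delta> \<in> T" "L + \<delta> \<in> T"
    using \<open>ball 0 \<epsilon>0 \<subseteq> T\<close> \<open>ball L \<epsilon>L \<subseteq> T\<close> by blast+
  moreover have "convex T"
  proof (rule convexI)
    fix u v a b :: real assume "u \<in> T" "v \<in> T" "0 \<le> a" "0 \<le> b" "a + b = 1"
    moreover have "x + (a * u + b * v) *\<^sub>R e = a *\<^sub>R (x + u *\<^sub>R e) + b *\<^sub>R (x + v *\<^sub>R e)"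
      using \<open>a + b = 1\<close> by (simp add: algebra_simps flip: scaleR_add_left)
    ultimately show "a *\<^sub>R u + b *\<^sub>R v \<in> T"
      using assms(2) by (auto simp: T_def convex_def)
  qed
  ultimately have "u \<in> T" if "u \<in> {-\<delta>..L + \<delta>}" for u
    using that is_interval_1[THEN iffD1, rule_format, of T "-\<delta>" "L + \<delta>" u]
    by (simp add: is_interval_convex_1)
  with \<open>\<delta> > 0\<close> show ?thesis
    using that by (simp add: T_def)
qed

lemma E_on_line:
  fixes tau :: "'a::euclidean_space \<Rightarrow> 'a \<Rightarrow> 'a \<Rightarrow> real"
  assumes "norm e = 1" "a < b"
  shows "E tau (x + a *\<^sub>R e, x + b *\<^sub>R e) = integral {a..b} (\<lambda>u. tau (x + u *\<^sub>R e) e e)"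
proof -
  have diff: "(x + b *\<^sub>R e) - (x + a *\<^sub>R e) = (b - a) *\<^sub>R e"
    by (simp add: algebra_simps)
  then have N: "N (x + a *\<^sub>R e) (x + b *\<^sub>R e) = e"
    using assms by (simp add: N_def)
  have "r (x + a *\<^sub>R e) (x + b *\<^sub>R e) = norm ((b - a) *\<^sub>R e)"
    unfolding r_def by (metis diff norm_minus_commute)
  then have "r (x + a *\<^sub>R e) (x + b *\<^sub>R e) = b - a"
    using assms by simp
  moreover have "\<theta> s (x + a *\<^sub>R e) (x + b *\<^sub>R e) = x + (s + a) *\<^sub>R e" for s
    by (simp add: \<theta>_def N algebra_simps)
  ultimately show ?thesis
    using integral_shift_real_ivl[of a a b "\<lambda>u. tau (x + u *\<^sub>R e) e e"] by (simp add: E_def N)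
qed

lemma deriv_deriv_integral_shrinking_interval:
  fixes f f' k :: "real \<Rightarrow> real"
  assumes f: "\<And>u. u \<in> {c<..<d} \<Longrightarrow> (f has_real_derivative f' u) (at u)"
    and "c < 0" "0 < L" "L < d"
    and k: "\<forall>\<^sub>F a in nhds 0. k a = integral {a..L - a} f"
  shows "deriv (deriv k) 0 = f' L - f' 0"
proof -
  define c' d' where "c' = c / 2" and "d' = (L + d) / 2"
  have "c < c'" "c' < 0" "L < d'" "d' < d"
    using \<open>c < 0\<close> \<open>0 < L\<close> \<open>L < d\<close> by (simp_all add: c'_def d'_def)
  have "continuous_on {c'..d'} f"
    using \<open>c < c'\<close> \<open>d' < d\<close>
    by (intro continuous_at_imp_continuous_on ballI DERIV_isCont[OF f]) auto
  define P where "P = (\<lambda>z. integral {c'..z} f)"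
  have P: "(P has_real_derivative f z) (at z)" if "c' < z" "z < d'" for z
    using integral_has_real_derivative[OF \<open>continuous_on {c'..d'} f\<close>, of z] that
    by (simp add: P_def at_within_Icc_at)
  define I where "I = {max c' (L - d')<..<L / 2}"
  have I: "\<forall>\<^sub>F a in nhds 0. a \<in> I"
    using \<open>c' < 0\<close> \<open>L < d'\<close> \<open>0 < L\<close> by (intro eventually_nhds_in_open) (auto simp: I_def)
  have "k a = P (L - a) - P a" if "a \<in> I" "k a = integral {a..L - a} f" for a
  proof -
    have "a < L - a" "c' < a" "L - a < d'"
      using that(1) by (auto simp: I_def)
    then have "f integrable_on {c'..L - a}"
      by (intro integrable_continuous_real continuous_on_subset[OF \<open>continuous_on {c'..d'} f\<close>]) auto
    then show ?thesis
      using that(2) Henstock_Kurzweil_Integration.integral_combine[of c' a "L - a" f]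
        \<open>a < L - a\<close> \<open>c' < a\<close>
      by (simp add: P_def)
  qed
  then have kP: "\<forall>\<^sub>F a in nhds 0. k a = P (L - a) - P a"
    using I k by (auto elim: eventually_elim2)
  have "deriv k t = - f (L - t) - f t" if "t \<in> I" "\<forall>\<^sub>F a in nhds t. k a = P (L - a) - P a" for t
  proof -
    have "((\<lambda>a. P (L - a) - P a) has_real_derivative f (L - t) * (- 1) - f t) (at t)"
      using that by (intro DERIV_diff DERIV_chain2[OF P] P) (auto intro!: derivative_eq_intros simp: I_def)
    then have "deriv (\<lambda>a. P (L - a) - P a) t = f (L - t) * (- 1) - f t"
      by (rule DERIV_imp_deriv)
    moreover have "deriv k t = deriv (\<lambda>a. P (L - a) - P a) t"
      using that(2) by (rule deriv_cong_ev) simp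
    ultimately show ?thesis
      by linarith
  qed
  then have "\<forall>\<^sub>F t in nhds 0. deriv k t = - f (L - t) - f t"
    using I eventually_eventually[THEN iffD2, OF kP] by (auto elim: eventually_elim2)
  then have "deriv (deriv k) 0 = deriv (\<lambda>t. - f (L - t) - f t) 0"
    by (rule deriv_cong_ev) simp
  also have "\<dots> = f' L - f' 0"
  proof (rule DERIV_imp_deriv)
    show "((\<lambda>t. - f (L - t) - f t) has_real_derivative f' L - f' 0) (at 0)"
      using \<open>c < 0\<close> \<open>0 < L\<close> \<open>L < d\<close>
      by (auto intro!: derivative_eq_intros DERIV_chain2[OF f] f)
  qed
  finally show ?thesis .
qed

theorem theorem2p5:
  fixes \<Omega> :: "'a::euclidean_space set"
    and tau :: "'a \<Rightarrow> 'a \<Rightarrow> 'a \<Rightarrow> real"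
    and x0 y0 :: 'a
  assumes "open \<Omega>" and "convex \<Omega>" and "\<Omega> \<noteq> {}"
    and "smooth_sym_tensor_on \<Omega> tau"
    and "x0 \<in> \<Omega>" and "y0 \<in> \<Omega>" and "x0 \<noteq> y0"
  shows "dirderiv (dirderiv (E tau) (N x0 y0, - N x0 y0)) (N x0 y0, - N x0 y0) (x0, y0)
           = E (cov_deriv (N x0 y0) (cov_deriv (N x0 y0) tau)) (x0, y0)"
proof -
  define L where "L = norm (y0 - x0)"
  define e where "e = N x0 y0"
  have "L > 0" "norm e = 1" and y0: "y0 = x0 + L *\<^sub>R e"
    using \<open>x0 \<noteq> y0\<close> by (simp_all add: L_def e_def N_def)
  define h where "h = (\<lambda>q. tau q e e)"
  have h: "Ck_on 2 \<Omega> h"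
    using assms(4) by (simp add: smooth_sym_tensor_on_def smooth_on_def h_def)
  obtain \<delta> where "\<delta> > 0" and on_line: "\<And>u. u \<in> {-\<delta>..L + \<delta>} \<Longrightarrow> x0 + u *\<^sub>R e \<in> \<Omega>"
    using extended_segment_in_open_convex[OF assms(1,2,5), of L e] assms(6) y0 \<open>L > 0\<close> by auto
  define f f1 where "f = (\<lambda>u. h (x0 + u *\<^sub>R e))" and "f1 = (\<lambda>u. dirderiv h e (x0 + u *\<^sub>R e))"
  have f: "(f has_real_derivative f1 u) (at u)"
    and f1: "(f1 has_real_derivative dirderiv (dirderiv h e) e (x0 + u *\<^sub>R e)) (at u)"
    if "u \<in> {-\<delta><..<L + \<delta>}" for u
    using that on_line[of u] h assms(1) unfolding f_def f1_def
    by (auto intro!: has_real_derivative_along_line differentiable_dirderiv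
        differentiable_at_if_Ck_on[of 2 \<Omega> h])
  have "\<forall>\<^sub>F a in nhds 0. E tau ((x0, y0) + a *\<^sub>R (e, - e)) = integral {a..L - a} f"
  proof (rule eventually_mono)
    show "\<forall>\<^sub>F a in nhds 0. a < L / 2"
      using eventually_nhds_in_open[of "{..<L / 2}" 0] \<open>L > 0\<close> by simp
    fix a :: real assume "a < L / 2"
    moreover have "(x0, y0) + a *\<^sub>R (e, - e) = (x0 + a *\<^sub>R e, x0 + (L - a) *\<^sub>R e)"
      by (simp add: y0 algebra_simps)
    ultimately show "E tau ((x0, y0) + a *\<^sub>R (e, - e)) = integral {a..L - a} f"
      using E_on_line[OF \<open>norm e = 1\<close>] by (simp add: f_def h_def)
  qed
  then have lhs: "dirderiv (dirderiv (E tau) (e, - e)) (e, - e) (x0, y0) = f1 L - f1 0"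
    unfolding dirderiv_dirderiv_eq_deriv_deriv
    using \<open>\<delta> > 0\<close> \<open>L > 0\<close> by (intro deriv_deriv_integral_shrinking_interval[OF f]) auto
  have "E (cov_deriv e (cov_deriv e tau)) (x0, y0)
      = integral {0..L} (\<lambda>u. dirderiv (dirderiv h e) e (x0 + u *\<^sub>R e))"
    using E_on_line[OF \<open>norm e = 1\<close> \<open>L > 0\<close>, where x = x0] y0
    by (simp add: cov_deriv_eq_dirderiv h_def)
  also have "\<dots> = f1 L - f1 0"
    using \<open>\<delta> > 0\<close> \<open>L > 0\<close> f1
    by (intro integral_unique fundamental_theorem_of_calculus)
      (auto simp: has_real_derivative_iff_has_vector_derivative intro: has_vector_derivative_at_within)
  finally show ?thesis
    using lhs by (simp add: e_def)
qed

end
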